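(* A rational quotient for the action of $W'$ on $X_T(\mathfrak{B})$ is given by \[ \operatorname{Spec}\big(\mathbb C[t_\bullet,\delta_\bullet,\tilde u_\bullet,\alpha_\bullet]_{\Delta}\big)\, . \] In particular, the field $\mathbb C(X_T(\mathfrak{B}))^{W'}$ of $W'$-invariant rational functions is purely transcendental over $\mathbb C$ of degree $4n-4$.
   Context: Setting: $V_1,\dots,V_n$ are qubits (2-dimensional complex vector spaces), $\mathscr V_i=\mathfrak{sl}(V_i)$ with the bilinear form $\langle A,B\rangle=\tfrac12\operatorname{tr}(AB)$. A longitudinal system $\mathfrak{B}=(\mathscr V_1^\ell,\dots,\mathscr V_n^\ell)$ is a choice of non-degenerate lines $\mathscr V_i^\ell\subset\mathscr V_i$; $\mathscr V_i^t$ denotes the orthogonal complement (a plane). Let $X^0(\mathfrak{B})=\bigoplus_{i=1}^n\mathscr V_i^\ell$, $X^1(\mathfrak{B})=\bigoplus_{j=1}^{n-1}\mathscr V_j^t\otimes\mathscr V_n^t$ (corresponding to the star spanning tree of the complete graph $K_n$ with center vertex $n$), and $X_T(\mathfrak{B})=X^0(\mathfrak{B})\oplus X^1(\mathfrak{B})$. The group $W'=\big(\prod_{i=1}^n\mathrm{SO}(\mathscr V_i^t)\big)/\{\pm I\}$ acts on $X_T(\mathfrak{B})$ (trivially on $X^0(\mathfrak{B})$, and on each $\mathscr V_j^t\otimes\mathscr V_n^t$ via the factors $j$ and $n$). A rational quotient is a variety whose function field is isomorphic to the field of invariant rational functions. Generators: choose orthonormal bases of each $\mathscr V_i^t$, identifying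 $\mathscr V_j^t\otimes\mathscr V_n^t$ with $M_2(\mathbb C)$. For the component $M$ in the $j$-th summand ($1\le j\le n-1$), write $M^tM=2t_jI+A_j$ with $A_j=\begin{pmatrix}a_j&b_j\\ b_j&-a_j\end{pmatrix}$ traceless, and set $\delta_j=\det M$. Let $w_j^\pm$ be the coordinates of the vector $(a_j,b_j)$ in the basis $e_\pm=e_1\pm ie_2$ (so $(a_j,b_j)=w_j^-e_-+w_j^+e_+$), set $u_{jk}=4w_j^+w_k^-$, $\tilde u_{jk}=u_{jk}/(\delta_j^2-t_j^2)$ for $j\neq k$, and $\tilde u_j=\tilde u_{1j}$ for $j=2,\dots,n-1$. For an orthonormal basis $e_j$ of $\mathscr V_j^\ell$, let $\alpha_j(v)=\langle v,e_j\rangle$ on $X^0(\mathfrak{B})$, $j=1,\dots,n$. Finally $\Delta=\prod_{i=1}^{n-1}\delta_i(\delta_i^2-t_i^2)$, and $\mathbb C[t_\bullet,\delta_\bullet,\tilde u_\bullet,\alpha_\bullet]_\Delta$ is the polynomial ring in $t_1,\dots,t_{n-1},\delta_1,\dots,\delta_{n-1},\tilde u_2,\dots,\tilde u_{n-1},\alpha_1,\dots,\alpha_n$ localized at $\Delta$. *)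

theory Defs
  imports Complex_Main
begin

(* A point of X_T(B) in orthonormal coordinates:
   fst x i        = alpha_i(x)            (i = 1..n)
   snd x j a b    = entry (a,b) of the 2x2 matrix M_j  (j = 1..n-1, a,b in {0,1})
   Other components are junk and ignored by all coordinate functions. *)
type_synonym pt = "(nat \<Rightarrow> complex) \<times> (nat \<Rightarrow> nat \<Rightarrow> nat \<Rightarrow> complex)"

inductive_set polyfuns :: "('a \<Rightarrow> complex) set \<Rightarrow> ('a \<Rightarrow> complex) set"
  for V :: "('a \<Rightarrow> complex) set" where
  pf_const: "(\<lambda>x. c) \<in> polyfuns V"
| pf_var: "f \<in> V \<Longrightarrow> f \<in> polyfuns V"
| pf_add: "f \<in> polyfuns V \<Longrightarrow> g \<in> polyfuns V \<Longrightarrow> (\<lambda>x. f x + g x) \<in> polyfuns V"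
| pf_mult: "f \<in> polyfuns V \<Longrightarrow> g \<in> polyfuns V \<Longrightarrow> (\<lambda>x. f x * g x) \<in> polyfuns V"

definition XT_coords :: "nat \<Rightarrow> (pt \<Rightarrow> complex) set" where
  "XT_coords n =
     {(\<lambda>x. fst x i) | i. 1 \<le> i \<and> i \<le> n} \<union>
     {(\<lambda>x. snd x j a b) | j a b. 1 \<le> j \<and> j \<le> n - 1 \<and> a < 2 \<and> b < 2}"

definition Y_coords :: "nat \<Rightarrow> ((nat \<Rightarrow> complex) \<Rightarrow> complex) set" where
  "Y_coords m = {(\<lambda>y. y k) | k. k < m}"

(* element of SO(2,C) in an orthonormal basis: [[c,-s],[s,c]] with c^2+s^2=1 *)
definition rot :: "complex \<Rightarrow> complex \<Rightarrow> nat \<Rightarrow> nat \<Rightarrow> complex" where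
  "rot c s a b = (if a = b then c else if a = 0 then - s else s)"

definition W'_param :: "nat \<Rightarrow> (nat \<Rightarrow> complex) \<Rightarrow> (nat \<Rightarrow> complex) \<Rightarrow> bool" where
  "W'_param n rc rs \<longleftrightarrow> (\<forall>i\<in>{1..n}. (rc i)\<^sup>2 + (rs i)\<^sup>2 = 1)"

(* action of (R_1,...,R_n) in prod SO(V_i^t): trivial on X^0, M_j |-> R_j M_j R_n^T on V_j^t (x) V_n^t *)
definition W'_act :: "nat \<Rightarrow> (nat \<Rightarrow> complex) \<Rightarrow> (nat \<Rightarrow> complex) \<Rightarrow> pt \<Rightarrow> pt" where
  "W'_act n rc rs x =
     (fst x, \<lambda>j a b. if 1 \<le> j \<and> j \<le> n - 1 \<and> a < 2 \<and> b < 2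
        then (\<Sum>p<2. \<Sum>q<2. rot (rc j) (rs j) a p * snd x j p q * rot (rc n) (rs n) b q)
        else snd x j a b)"

definition MtM :: "pt \<Rightarrow> nat \<Rightarrow> nat \<Rightarrow> nat \<Rightarrow> complex" where
  "MtM x j a b = (\<Sum>p<2. snd x j p a * snd x j p b)"

(* M^T M = 2 t I + A,  A = [[a,b],[b,-a]] *)
definition tq :: "pt \<Rightarrow> nat \<Rightarrow> complex" where
  "tq x j = (MtM x j 0 0 + MtM x j 1 1) / 4"

definition aq :: "pt \<Rightarrow> nat \<Rightarrow> complex" where
  "aq x j = (MtM x j 0 0 - MtM x j 1 1) / 2"

definition bq :: "pt \<Rightarrow> nat \<Rightarrow> complex" where
  "bq x j = MtM x j 0 1"

definition delq :: "pt \<Rightarrow> nat \<Rightarrow> complex" where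
  "delq x j = snd x j 0 0 * snd x j 1 1 - snd x j 0 1 * snd x j 1 0"

(* (a,b) = w^- e_- + w^+ e_+ with e_pm = e_1 pm i e_2 *)
definition wplus :: "pt \<Rightarrow> nat \<Rightarrow> complex" where
  "wplus x j = (aq x j - \<i> * bq x j) / 2"

definition wminus :: "pt \<Rightarrow> nat \<Rightarrow> complex" where
  "wminus x j = (aq x j + \<i> * bq x j) / 2"

definition uq :: "pt \<Rightarrow> nat \<Rightarrow> nat \<Rightarrow> complex" where
  "uq x j k = 4 * wplus x j * wminus x k"

definition utq :: "pt \<Rightarrow> nat \<Rightarrow> complex" where
  "utq x j = uq x 1 j / ((delq x 1)\<^sup>2 - (tq x 1)\<^sup>2)"

definition gens :: "nat \<Rightarrow> pt \<Rightarrow> nat \<Rightarrow> complex" where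
  "gens n x k =
     (if k < n - 1 then tq x (k + 1)
      else if k < 2 * n - 2 then delq x (k - (n - 1) + 1)
      else if k < 3 * n - 4 then utq x (k - (2 * n - 2) + 2)
      else if k < 4 * n - 4 then fst x (k - (3 * n - 4) + 1)
      else 0)"

definition BigDelta :: "nat \<Rightarrow> pt \<Rightarrow> complex" where
  "BigDelta n x = (\<Prod>i\<in>{1..n - 1}. delq x i * ((delq x i)\<^sup>2 - (tq x i)\<^sup>2))"

end

theory Submission
  imports Defs "HOL-Computational_Algebra.Polynomial"
begin

text \<open>The isotropic vectors \<open>e\<^sub>\<plusminus>\<close> diagonalise \<open>SO(V\<^sub>i\<^sup>t)\<close>, so \<open>W'\<close> acts through a torus
  \<open>(\<complex>\<^sup>*)\<^sup>n\<close> that scales the four isotropic entries of \<open>M\<^sub>j\<close> by \<open>\<lambda>\<^sub>j\<^sup>\<plusminus>\<^sup>1 \<lambda>\<^sub>n\<^sup>\<plusminus>\<^sup>1\<close>; the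
  generators are monomial invariants of this action. Conversely, a generic point \<open>x\<close> lies in the
  torus orbit of \<open>slice (gens x)\<close>, a normal form whose entries are rational in the generators
  and which satisfies \<open>gens (slice y) = y\<close>. Hence the generators are algebraically independent
  (their image is Zariski dense), and an invariant \<open>p/q\<close> agrees with its value at
  \<open>slice (gens x)\<close>, a rational function of \<open>gens x\<close>: first at generic points, then by density
  wherever \<open>\<Delta> \<noteq> 0\<close>.\<close>

section \<open>Polynomial and rational functions\<close>

lemma polyfuns_diff:
  assumes "f \<in> polyfuns V" "g \<in> polyfuns V"
  shows "(\<lambda>x. f x - g x) \<in> polyfuns V"
  using pf_add[OF assms(1) pf_mult[OF pf_const assms(2), of "-1"]] by simp

lemma polyfuns_power:
  assumes "f \<in> polyfuns V"
  shows "(\<lambda>x. f x ^ k) \<in> polyfuns V"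
  by (induction k) (simp_all add: pf_const pf_mult[OF assms])

lemma polyfuns_divide_const: "f \<in> polyfuns V \<Longrightarrow> (\<lambda>x. f x / c) \<in> polyfuns V"
  using pf_mult[OF _ pf_const, of f V "1 / c"] by simp

lemma polyfuns_prod:
  assumes "finite A" "\<And>i. i \<in> A \<Longrightarrow> f i \<in> polyfuns V"
  shows "(\<lambda>x. \<Prod>i\<in>A. f i x) \<in> polyfuns V"
  using assms by (induction A rule: finite_induct) (simp_all add: pf_const pf_mult)

definition polynomial_curves :: "('a \<Rightarrow> complex) set \<Rightarrow> ('a \<Rightarrow> 'a \<Rightarrow> complex \<Rightarrow> 'a) \<Rightarrow> bool" where
  "polynomial_curves V C \<longleftrightarrow>
     (\<forall>x0 x1. C x0 x1 0 = x0 \<and> C x0 x1 1 = x1 \<and> (\<forall>v\<in>V. \<exists>p. \<forall>t. v (C x0 x1 t) = poly p t))"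

lemma polyfuns_poly_along:
  assumes "\<forall>v\<in>V. \<exists>p. \<forall>t. v (C t) = poly p t"
  shows "f \<in> polyfuns V \<Longrightarrow> \<exists>p. \<forall>t. f (C t) = poly p t"
proof (induction rule: polyfuns.induct)
  case (pf_const c)
  show ?case by (rule exI[of _ "[:c:]"]) simp
next
  case (pf_var f)
  then show ?case using assms by blast
next
  case (pf_add f g)
  then obtain p q where "\<forall>t. f (C t) = poly p t" "\<forall>t. g (C t) = poly q t" by blast
  then show ?case by (intro exI[of _ "p + q"]) simp
next
  case (pf_mult f g)
  then obtain p q where "\<forall>t. f (C t) = poly p t" "\<forall>t. g (C t) = poly q t" by blast
  then show ?case by (intro exI[of _ "p * q"]) simp
qed

text \<open>Restrict to the curve from \<open>x\<close> to a point where \<open>g\<close> does not vanish: there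
  \<open>f \<cdot> g\<close> is a one-variable polynomial vanishing everywhere, and \<open>g\<close> is not identically zero.\<close>
lemma polyfun_vanishing_on_principal_open:
  assumes C: "polynomial_curves V C"
    and f: "f \<in> polyfuns V" and g: "g \<in> polyfuns V"
    and "g x1 \<noteq> 0" and vanish: "\<And>x. g x \<noteq> 0 \<Longrightarrow> f x = 0"
  shows "f x = 0"
proof -
  have curve: "\<forall>v\<in>V. \<exists>p. \<forall>t. v (C x x1 t) = poly p t"
    using C by (simp add: polynomial_curves_def)
  obtain pf where pf: "\<And>t. f (C x x1 t) = poly pf t"
    using polyfuns_poly_along[OF curve f] by blast
  obtain pg where pg: "\<And>t. g (C x x1 t) = poly pg t"
    using polyfuns_poly_along[OF curve g] by blast
  have "poly (pf * pg) t = 0" for t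
    using vanish[of "C x x1 t"] by (auto simp: pf pg)
  then have "pf * pg = 0" using poly_all_0_iff_0 by blast
  moreover have "pg \<noteq> 0"
    using pg[of 1] \<open>g x1 \<noteq> 0\<close> C by (auto simp: polynomial_curves_def)
  ultimately have "pf = 0" by simp
  then show ?thesis using pf[of 0] C by (simp add: polynomial_curves_def)
qed

definition rational_on :: "('a \<Rightarrow> complex) set \<Rightarrow> 'a set \<Rightarrow> ('a \<Rightarrow> complex) \<Rightarrow> bool" where
  "rational_on V S h \<longleftrightarrow>
     (\<exists>c\<in>polyfuns V. \<exists>d\<in>polyfuns V. \<forall>x\<in>S. d x \<noteq> 0 \<and> h x = c x / d x)"

lemma rational_on_polyfun: "f \<in> polyfuns V \<Longrightarrow> rational_on V S f"
  unfolding rational_on_def by (intro bexI[OF _ pf_const[of 1]] bexI) simp_all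

lemma rational_on_add:
  assumes "rational_on V S h" "rational_on V S k"
  shows "rational_on V S (\<lambda>x. h x + k x)"
proof -
  obtain c d c' d' where "c \<in> polyfuns V" "d \<in> polyfuns V" "c' \<in> polyfuns V" "d' \<in> polyfuns V"
    and "\<forall>x\<in>S. d x \<noteq> 0 \<and> h x = c x / d x" "\<forall>x\<in>S. d' x \<noteq> 0 \<and> k x = c' x / d' x"
    using assms unfolding rational_on_def by blast
  then show ?thesis unfolding rational_on_def
    by (intro bexI[of _ "\<lambda>x. c x * d' x + c' x * d x"] bexI[of _ "\<lambda>x. d x * d' x"])
       (auto simp: field_simps intro: pf_add pf_mult)
qed

lemma rational_on_mult:
  assumes "rational_on V S h" "rational_on V S k"
  shows "rational_on V S (\<lambda>x. h x * k x)"
proof -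
  obtain c d c' d' where "c \<in> polyfuns V" "d \<in> polyfuns V" "c' \<in> polyfuns V" "d' \<in> polyfuns V"
    and "\<forall>x\<in>S. d x \<noteq> 0 \<and> h x = c x / d x" "\<forall>x\<in>S. d' x \<noteq> 0 \<and> k x = c' x / d' x"
    using assms unfolding rational_on_def by blast
  then show ?thesis unfolding rational_on_def
    by (intro bexI[of _ "\<lambda>x. c x * c' x"] bexI[of _ "\<lambda>x. d x * d' x"]) (auto intro: pf_mult)
qed

lemma rational_on_divide:
  assumes "rational_on V S h" "rational_on V S k" "\<And>x. x \<in> S \<Longrightarrow> k x \<noteq> 0"
  shows "rational_on V S (\<lambda>x. h x / k x)"
proof -
  obtain c d c' d' where "c \<in> polyfuns V" "d \<in> polyfuns V" "c' \<in> polyfuns V" "d' \<in> polyfuns V"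
    and "\<forall>x\<in>S. d x \<noteq> 0 \<and> h x = c x / d x" "\<forall>x\<in>S. d' x \<noteq> 0 \<and> k x = c' x / d' x"
    using assms(1,2) unfolding rational_on_def by blast
  with assms(3) show ?thesis unfolding rational_on_def
    by (intro bexI[of _ "\<lambda>x. c x * d' x"] bexI[of _ "\<lambda>x. d x * c' x"]) (auto intro: pf_mult)
qed

lemma rational_on_diff:
  assumes "rational_on V S h" "rational_on V S k"
  shows "rational_on V S (\<lambda>x. h x - k x)"
  using rational_on_add[OF assms(1) rational_on_mult[OF rational_on_polyfun[OF pf_const] assms(2)], of "-1"]
  by simp

lemma rational_on_compose:
  assumes "\<forall>w\<in>W. rational_on V S (\<lambda>x. w (\<phi> x))"
  shows "F \<in> polyfuns W \<Longrightarrow> rational_on V S (\<lambda>x. F (\<phi> x))"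
  by (induction rule: polyfuns.induct)
     (use assms in \<open>auto intro: rational_on_polyfun pf_const rational_on_add rational_on_mult\<close>)

lemma rational_on_vanishing_on_principal_open:
  assumes C: "polynomial_curves V C" and h: "rational_on V {x. s x \<noteq> 0} h"
    and g: "g \<in> polyfuns V" "g x1 \<noteq> 0"
    and vanish: "\<And>x. g x \<noteq> 0 \<Longrightarrow> s x \<noteq> 0 \<and> h x = 0"
    and "s x \<noteq> 0"
  shows "h x = 0"
proof -
  obtain c d where c: "c \<in> polyfuns V" and "d \<in> polyfuns V"
    and cd: "\<And>x. s x \<noteq> 0 \<Longrightarrow> d x \<noteq> 0 \<and> h x = c x / d x"
    using h unfolding rational_on_def by auto
  have "c x' = 0" for x'
    by (rule polyfun_vanishing_on_principal_open[OF C c g]) (use vanish cd in force)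
  then show ?thesis using cd \<open>s x \<noteq> 0\<close> by simp
qed

definition segment_pt :: "pt \<Rightarrow> pt \<Rightarrow> complex \<Rightarrow> pt" where
  "segment_pt x0 x1 t =
     (\<lambda>i. fst x0 i + t * (fst x1 i - fst x0 i),
      \<lambda>j a b. snd x0 j a b + t * (snd x1 j a b - snd x0 j a b))"

definition segment_vec :: "(nat \<Rightarrow> complex) \<Rightarrow> (nat \<Rightarrow> complex) \<Rightarrow> complex \<Rightarrow> nat \<Rightarrow> complex" where
  "segment_vec y0 y1 t k = y0 k + t * (y1 k - y0 k)"

lemma poly_segment: "a + t * (b - a) = poly [:a, b - a:] t"
  by simp

lemma polynomial_curves_XT: "polynomial_curves (XT_coords n) segment_pt"
  unfolding polynomial_curves_def XT_coords_def
  by (auto simp: segment_pt_def poly_segment simp del: poly_pCons)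

lemma polynomial_curves_Y: "polynomial_curves (Y_coords m) segment_vec"
  unfolding polynomial_curves_def Y_coords_def
  by (auto simp: segment_vec_def poly_segment simp del: poly_pCons)

definition same_coords :: "nat \<Rightarrow> pt \<Rightarrow> pt \<Rightarrow> bool" where
  "same_coords n x x' \<longleftrightarrow> (\<forall>i\<in>{1..n}. fst x i = fst x' i) \<and>
     (\<forall>j\<in>{1..n - 1}. \<forall>a<2. \<forall>b<2. snd x j a b = snd x' j a b)"

lemma polyfuns_same_coords: "f \<in> polyfuns (XT_coords n) \<Longrightarrow> same_coords n x x' \<Longrightarrow> f x = f x'"
  by (induction rule: polyfuns.induct) (auto simp: XT_coords_def same_coords_def)

lemma polyfuns_Y_coords_cong:
  "f \<in> polyfuns (Y_coords m) \<Longrightarrow> (\<And>k. k < m \<Longrightarrow> y k = y' k) \<Longrightarrow> f y = f y'"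
  by (induction rule: polyfuns.induct) (auto simp: Y_coords_def)

lemma polyfuns_XT_alpha: "i \<in> {1..n} \<Longrightarrow> (\<lambda>x. fst x i) \<in> polyfuns (XT_coords n)"
  by (rule pf_var) (auto simp: XT_coords_def)

lemma polyfuns_XT_entry:
  "j \<in> {1..n - 1} \<Longrightarrow> a < 2 \<Longrightarrow> b < 2 \<Longrightarrow> (\<lambda>x. snd x j a b) \<in> polyfuns (XT_coords n)"
  by (rule pf_var) (auto simp: XT_coords_def)

lemma polyfuns_Y_coord: "k < m \<Longrightarrow> (\<lambda>y. y k) \<in> polyfuns (Y_coords m)"
  by (rule pf_var) (auto simp: Y_coords_def)

lemma sum_less_2: "(\<Sum>a<2. g a) = g 0 + g (1::nat)"
  by (simp add: numeral_2_eq_2)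

lemma less_2_cases: "(a::nat) < 2 \<longleftrightarrow> a = 0 \<or> a = 1"
  by auto

definition coord_t :: "(nat \<Rightarrow> complex) \<Rightarrow> nat \<Rightarrow> complex" where
  "coord_t y j = y (j - 1)"

definition coord_delta :: "nat \<Rightarrow> (nat \<Rightarrow> complex) \<Rightarrow> nat \<Rightarrow> complex" where
  "coord_delta n y j = y (n - 2 + j)"

definition coord_u :: "nat \<Rightarrow> (nat \<Rightarrow> complex) \<Rightarrow> nat \<Rightarrow> complex" where
  "coord_u n y j = y (2 * n - 4 + j)"

definition coord_alpha :: "nat \<Rightarrow> (nat \<Rightarrow> complex) \<Rightarrow> nat \<Rightarrow> complex" where
  "coord_alpha n y i = y (3 * n - 5 + i)"

lemma one_in_range: "2 \<le> n \<Longrightarrow> (1::nat) \<in> {1..n - 1}"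
  by simp

lemma Y_index_cases:
  fixes k n :: nat
  assumes "2 \<le> n" "k < 4 * n - 4"
  obtains (t) j where "j \<in> {1..n - 1}" "k = j - 1"
    | (delta) j where "j \<in> {1..n - 1}" "k = n - 2 + j"
    | (u) j where "j \<in> {2..n - 1}" "k = 2 * n - 4 + j"
    | (alpha) i where "i \<in> {1..n}" "k = 3 * n - 5 + i"
proof -
  consider "k < n - 1" | "n - 1 \<le> k" "k < 2 * n - 2" | "2 * n - 2 \<le> k" "k < 3 * n - 4"
    | "3 * n - 4 \<le> k" by linarith
  then show ?thesis
  proof cases
    case 1
    show ?thesis by (rule t[of "k + 1"]) (use 1 in auto)
  next
    case 2
    show ?thesis by (rule delta[of "k + 2 - n"]) (use 2 assms in auto)
  next
    case 3
    show ?thesis by (rule u[of "k + 4 - 2 * n"]) (use 3 assms in auto)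
  next
    case 4
    show ?thesis by (rule alpha[of "k + 5 - 3 * n"]) (use 4 assms in auto)
  qed
qed

lemma Y_coords_eqI:
  assumes "2 \<le> n" "k < 4 * n - 4"
    and "\<forall>j\<in>{1..n - 1}. coord_t y j = coord_t y' j \<and> coord_delta n y j = coord_delta n y' j"
    and "\<forall>j\<in>{2..n - 1}. coord_u n y j = coord_u n y' j"
    and "\<forall>i\<in>{1..n}. coord_alpha n y i = coord_alpha n y' i"
  shows "y k = y' k"
  using assms(1,2) by (cases rule: Y_index_cases) (use assms(3-5) in
    \<open>auto simp: coord_t_def coord_delta_def coord_u_def coord_alpha_def\<close>)

lemma gens_blocks:
  shows "k < n - 1 \<Longrightarrow> gens n x k = tq x (k + 1)"
    and "n - 1 \<le> k \<Longrightarrow> k < 2 * n - 2 \<Longrightarrow> gens n x k = delq x (k - (n - 1) + 1)"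
    and "2 * n - 2 \<le> k \<Longrightarrow> k < 3 * n - 4 \<Longrightarrow> gens n x k = utq x (k - (2 * n - 2) + 2)"
    and "3 * n - 4 \<le> k \<Longrightarrow> k < 4 * n - 4 \<Longrightarrow> gens n x k = fst x (k - (3 * n - 4) + 1)"
  by (auto simp: gens_def)

lemma coords_gens:
  assumes "2 \<le> n"
  shows "j \<in> {1..n - 1} \<Longrightarrow> coord_t (gens n x) j = tq x j"
    and "j \<in> {1..n - 1} \<Longrightarrow> coord_delta n (gens n x) j = delq x j"
    and "j \<in> {2..n - 1} \<Longrightarrow> coord_u n (gens n x) j = utq x j"
    and "i \<in> {1..n} \<Longrightarrow> coord_alpha n (gens n x) i = fst x i"
proof -
  assume "j \<in> {1..n - 1}"
  then have "j - 1 < n - 1" "j - 1 + 1 = j" by auto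
  then show "coord_t (gens n x) j = tq x j"
    unfolding coord_t_def by (simp add: gens_blocks(1))
next
  assume "j \<in> {1..n - 1}"
  then have "n - 1 \<le> n - 2 + j" "n - 2 + j < 2 * n - 2" "n - 2 + j - (n - 1) + 1 = j"
    using assms by auto
  then show "coord_delta n (gens n x) j = delq x j"
    unfolding coord_delta_def by (simp add: gens_blocks(2))
next
  assume "j \<in> {2..n - 1}"
  then have "2 * n - 2 \<le> 2 * n - 4 + j" "2 * n - 4 + j < 3 * n - 4" "2 * n - 4 + j - (2 * n - 2) + 2 = j"
    using assms by auto
  then show "coord_u n (gens n x) j = utq x j"
    unfolding coord_u_def by (simp add: gens_blocks(3))
next
  assume "i \<in> {1..n}"
  then have "3 * n - 4 \<le> 3 * n - 5 + i" "3 * n - 5 + i < 4 * n - 4" "3 * n - 5 + i - (3 * n - 4) + 1 = i"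
    using assms by auto
  then show "coord_alpha n (gens n x) i = fst x i"
    unfolding coord_alpha_def by (simp add: gens_blocks(4))
qed

lemma polyfuns_coords:
  assumes "2 \<le> n"
  shows "j \<in> {1..n - 1} \<Longrightarrow> (\<lambda>y. coord_t y j) \<in> polyfuns (Y_coords (4 * n - 4))"
    and "j \<in> {1..n - 1} \<Longrightarrow> (\<lambda>y. coord_delta n y j) \<in> polyfuns (Y_coords (4 * n - 4))"
    and "j \<in> {2..n - 1} \<Longrightarrow> (\<lambda>y. coord_u n y j) \<in> polyfuns (Y_coords (4 * n - 4))"
    and "i \<in> {1..n} \<Longrightarrow> (\<lambda>y. coord_alpha n y i) \<in> polyfuns (Y_coords (4 * n - 4))"
  using assms
  by (auto simp: coord_t_def coord_delta_def coord_u_def coord_alpha_def intro!: polyfuns_Y_coord)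

section \<open>Isotropic coordinates\<close>

text \<open>\<open>iso_vec 0\<close> and \<open>iso_vec 1\<close> are the isotropic vectors \<open>e\<^sub>- = (1, -i)\<close> and
  \<open>e\<^sub>+ = (1, i)\<close>; \<open>iso m\<close> lists the coefficients of \<open>m\<close> in the basis
  \<open>e\<^sub>e \<otimes> e\<^sub>f\<close>, in which \<open>SO(2)\<times>SO(2)\<close> acts diagonally.\<close>
definition iso_vec :: "nat \<Rightarrow> nat \<Rightarrow> complex" where
  "iso_vec e a = (if a = 0 then 1 else if e = 0 then - \<i> else \<i>)"

definition iso :: "(nat \<Rightarrow> nat \<Rightarrow> complex) \<Rightarrow> nat \<Rightarrow> nat \<Rightarrow> complex" where
  "iso m e f = (\<Sum>a<2. \<Sum>b<2. iso_vec (1 - e) a * m a b * iso_vec (1 - f) b) / 4"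

definition from_iso :: "(nat \<Rightarrow> nat \<Rightarrow> complex) \<Rightarrow> nat \<Rightarrow> nat \<Rightarrow> complex" where
  "from_iso z a b = (\<Sum>e<2. \<Sum>f<2. z e f * iso_vec e a * iso_vec f b)"

definition rot_eigval :: "complex \<Rightarrow> complex \<Rightarrow> nat \<Rightarrow> complex" where
  "rot_eigval c s e = (if e = 0 then c + \<i> * s else c - \<i> * s)"

lemma from_iso_iso: "a < 2 \<Longrightarrow> b < 2 \<Longrightarrow> from_iso (iso m) a b = m a b"
  unfolding less_2_cases by (auto simp: from_iso_def iso_def sum_less_2 iso_vec_def field_simps)

lemma iso_from_iso: "e < 2 \<Longrightarrow> f < 2 \<Longrightarrow> iso (from_iso z) e f = z e f"
  unfolding less_2_cases by (auto simp: from_iso_def iso_def sum_less_2 iso_vec_def field_simps)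

lemma iso_rot_conj:
  "e < 2 \<Longrightarrow> f < 2 \<Longrightarrow>
   iso (\<lambda>a b. \<Sum>p<2. \<Sum>q<2. rot c s a p * m p q * rot c' s' b q) e f
     = rot_eigval c s e * rot_eigval c' s' f * iso m e f"
  unfolding less_2_cases
  by (auto simp: rot_def rot_eigval_def iso_def sum_less_2 iso_vec_def field_simps)

lemma rot_eigval_mult: "c\<^sup>2 + s\<^sup>2 = 1 \<Longrightarrow> rot_eigval c s 0 * rot_eigval c s 1 = 1"
  by (simp add: rot_eigval_def algebra_simps power2_eq_square)

definition isoM :: "pt \<Rightarrow> nat \<Rightarrow> nat \<Rightarrow> nat \<Rightarrow> complex" where
  "isoM x j = iso (snd x j)"

definition iso_A :: "pt \<Rightarrow> nat \<Rightarrow> complex" where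
  "iso_A x j = isoM x j 0 0 * isoM x j 1 1"

definition iso_B :: "pt \<Rightarrow> nat \<Rightarrow> complex" where
  "iso_B x j = isoM x j 0 1 * isoM x j 1 0"

lemma snd_eq_from_iso: "a < 2 \<Longrightarrow> b < 2 \<Longrightarrow> snd x j a b = from_iso (isoM x j) a b"
  by (simp add: isoM_def from_iso_iso)

lemma from_iso_cong:
  "(\<And>e f. e < 2 \<Longrightarrow> f < 2 \<Longrightarrow> z e f = z' e f) \<Longrightarrow> from_iso z a b = from_iso z' a b"
  by (auto simp: from_iso_def intro!: sum.cong)

lemma same_coordsI:
  assumes "\<forall>i\<in>{1..n}. fst x i = fst x' i"
    and "\<forall>j\<in>{1..n - 1}. \<forall>e<2. \<forall>f<2. isoM x j e f = isoM x' j e f"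
  shows "same_coords n x x'"
  using assms by (auto simp: same_coords_def snd_eq_from_iso intro!: from_iso_cong)

lemma tq_iso: "tq x j = 2 * (iso_A x j + iso_B x j)"
  by (simp add: tq_def MtM_def iso_A_def iso_B_def isoM_def iso_def sum_less_2 iso_vec_def field_simps)

lemma delq_iso: "delq x j = -4 * (iso_A x j - iso_B x j)"
  by (simp add: delq_def iso_A_def iso_B_def isoM_def iso_def sum_less_2 iso_vec_def field_simps)

lemma wplus_iso: "wplus x j = 4 * isoM x j 0 1 * isoM x j 1 1"
  by (simp add: wplus_def aq_def bq_def MtM_def isoM_def iso_def sum_less_2 iso_vec_def field_simps)

lemma wminus_iso: "wminus x j = 4 * isoM x j 0 0 * isoM x j 1 0"
  by (simp add: wminus_def aq_def bq_def MtM_def isoM_def iso_def sum_less_2 iso_vec_def field_simps)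

lemma polyfuns_isoM: "j \<in> {1..n - 1} \<Longrightarrow> (\<lambda>x. isoM x j e f) \<in> polyfuns (XT_coords n)"
  unfolding isoM_def iso_def sum_less_2
  by (intro polyfuns_divide_const pf_add pf_mult pf_const polyfuns_XT_entry) auto

lemma polyfuns_tq: "j \<in> {1..n - 1} \<Longrightarrow> (\<lambda>x. tq x j) \<in> polyfuns (XT_coords n)"
  unfolding tq_iso iso_A_def iso_B_def by (intro pf_add pf_mult pf_const polyfuns_isoM)

lemma polyfuns_delq: "j \<in> {1..n - 1} \<Longrightarrow> (\<lambda>x. delq x j) \<in> polyfuns (XT_coords n)"
  unfolding delq_iso iso_A_def iso_B_def by (intro polyfuns_diff pf_mult pf_const polyfuns_isoM)

lemma polyfuns_uq: "j \<in> {1..n - 1} \<Longrightarrow> (\<lambda>x. uq x 1 j) \<in> polyfuns (XT_coords n)"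
  unfolding uq_def wplus_iso wminus_iso by (intro pf_mult pf_const polyfuns_isoM) auto

lemma polyfuns_BigDelta: "BigDelta n \<in> polyfuns (XT_coords n)"
  unfolding BigDelta_def
  by (intro polyfuns_prod pf_mult polyfuns_diff polyfuns_power polyfuns_tq polyfuns_delq) auto

section \<open>Invariance of the generators\<close>

lemma fst_W'_act: "fst (W'_act n rc rs x) = fst x"
  by (simp add: W'_act_def)

lemma isoM_W'_act:
  assumes "j \<in> {1..n - 1}" "e < 2" "f < 2"
  shows "isoM (W'_act n rc rs x) j e f = rot_eigval (rc j) (rs j) e * rot_eigval (rc n) (rs n) f * isoM x j e f"
  using assms iso_rot_conj[OF assms(2,3)] by (simp add: isoM_def iso_def W'_act_def sum_less_2)

context
  fixes n :: nat and rc rs :: "nat \<Rightarrow> complex"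
  assumes W: "W'_param n rc rs"
begin

lemma rot_eigval_mult_W':
  assumes "j \<in> {1..n - 1}"
  shows "rot_eigval (rc j) (rs j) 0 * rot_eigval (rc j) (rs j) 1 = 1"
    and "rot_eigval (rc n) (rs n) 0 * rot_eigval (rc n) (rs n) 1 = 1"
proof -
  have "j \<in> {1..n}" "n \<in> {1..n}" using assms by auto
  then show "rot_eigval (rc j) (rs j) 0 * rot_eigval (rc j) (rs j) 1 = 1"
    and "rot_eigval (rc n) (rs n) 0 * rot_eigval (rc n) (rs n) 1 = 1"
    using W unfolding W'_param_def by (blast intro: rot_eigval_mult)+
qed

lemma iso_A_W'_act:
  assumes j: "j \<in> {1..n - 1}"
  shows "iso_A (W'_act n rc rs x) j = iso_A x j"
proof -
  have "iso_A (W'_act n rc rs x) j =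
      (rot_eigval (rc j) (rs j) 0 * rot_eigval (rc j) (rs j) 1) *
      (rot_eigval (rc n) (rs n) 0 * rot_eigval (rc n) (rs n) 1) * iso_A x j"
    using j by (simp add: iso_A_def isoM_W'_act ac_simps)
  then show ?thesis by (simp only: rot_eigval_mult_W'[OF j] mult_1)
qed

lemma iso_B_W'_act:
  assumes j: "j \<in> {1..n - 1}"
  shows "iso_B (W'_act n rc rs x) j = iso_B x j"
proof -
  have "iso_B (W'_act n rc rs x) j =
      (rot_eigval (rc j) (rs j) 0 * rot_eigval (rc j) (rs j) 1) *
      (rot_eigval (rc n) (rs n) 0 * rot_eigval (rc n) (rs n) 1) * iso_B x j"
    using j by (simp add: iso_B_def isoM_W'_act ac_simps)
  then show ?thesis by (simp only: rot_eigval_mult_W'[OF j] mult_1)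
qed

lemma wplus_W'_act:
  assumes j: "j \<in> {1..n - 1}"
  shows "wplus (W'_act n rc rs x) j = (rot_eigval (rc n) (rs n) 1)\<^sup>2 * wplus x j"
proof -
  have "wplus (W'_act n rc rs x) j =
      (rot_eigval (rc j) (rs j) 0 * rot_eigval (rc j) (rs j) 1) * (rot_eigval (rc n) (rs n) 1)\<^sup>2 * wplus x j"
    using j by (simp add: wplus_iso isoM_W'_act power2_eq_square ac_simps)
  then show ?thesis by (simp only: rot_eigval_mult_W'[OF j] mult_1)
qed

lemma wminus_W'_act:
  assumes j: "j \<in> {1..n - 1}"
  shows "wminus (W'_act n rc rs x) j = (rot_eigval (rc n) (rs n) 0)\<^sup>2 * wminus x j"
proof -
  have "wminus (W'_act n rc rs x) j =
      (rot_eigval (rc j) (rs j) 0 * rot_eigval (rc j) (rs j) 1) * (rot_eigval (rc n) (rs n) 0)\<^sup>2 * wminus x j"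
    using j by (simp add: wminus_iso isoM_W'_act power2_eq_square ac_simps)
  then show ?thesis by (simp only: rot_eigval_mult_W'[OF j] mult_1)
qed

lemma tq_W'_act: "j \<in> {1..n - 1} \<Longrightarrow> tq (W'_act n rc rs x) j = tq x j"
  by (simp add: tq_iso iso_A_W'_act iso_B_W'_act)

lemma delq_W'_act: "j \<in> {1..n - 1} \<Longrightarrow> delq (W'_act n rc rs x) j = delq x j"
  by (simp add: delq_iso iso_A_W'_act iso_B_W'_act)

lemma uq_W'_act:
  assumes j: "j \<in> {1..n - 1}"
  shows "uq (W'_act n rc rs x) 1 j = uq x 1 j"
proof -
  have one: "1 \<in> {1..n - 1}" using j by simp
  have "uq (W'_act n rc rs x) 1 j =
      (rot_eigval (rc n) (rs n) 0 * rot_eigval (rc n) (rs n) 1)\<^sup>2 * uq x 1 j"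
    using j one by (simp add: uq_def wplus_W'_act wminus_W'_act power_mult_distrib ac_simps)
  then show ?thesis by (simp only: rot_eigval_mult_W'[OF j] power_one mult_1)
qed

lemma utq_W'_act:
  assumes j: "j \<in> {1..n - 1}"
  shows "utq (W'_act n rc rs x) j = utq x j"
proof -
  have one: "1 \<in> {1..n - 1}" using j by simp
  show ?thesis
    unfolding utq_def uq_W'_act[OF j] tq_W'_act[OF one] delq_W'_act[OF one] ..
qed

lemma gens_W'_act: "gens n (W'_act n rc rs x) = gens n x"
  by (rule ext) (auto simp: gens_def tq_W'_act delq_W'_act utq_W'_act fst_W'_act)

lemma BigDelta_W'_act: "BigDelta n (W'_act n rc rs x) = BigDelta n x"
  unfolding BigDelta_def by (rule prod.cong) (simp_all add: tq_W'_act delq_W'_act)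

end

section \<open>The torus\<close>

definition torus_cos :: "complex \<Rightarrow> complex" where
  "torus_cos l = (l + 1 / l) / 2"

definition torus_sin :: "complex \<Rightarrow> complex" where
  "torus_sin l = (l - 1 / l) / (2 * \<i>)"

definition torus_weight :: "complex \<Rightarrow> nat \<Rightarrow> complex" where
  "torus_weight l e = (if e = 0 then l else 1 / l)"

definition torus_act :: "nat \<Rightarrow> (nat \<Rightarrow> complex) \<Rightarrow> pt \<Rightarrow> pt" where
  "torus_act n L = W'_act n (\<lambda>i. torus_cos (L i)) (\<lambda>i. torus_sin (L i))"

lemma rot_eigval_torus: "rot_eigval (torus_cos l) (torus_sin l) e = torus_weight l e"
  by (auto simp: rot_eigval_def torus_cos_def torus_sin_def torus_weight_def field_simps)

lemma W'_param_torus: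
  "(\<forall>i\<in>{1..n}. L i \<noteq> 0) \<Longrightarrow> W'_param n (\<lambda>i. torus_cos (L i)) (\<lambda>i. torus_sin (L i))"
  by (auto simp: W'_param_def torus_cos_def torus_sin_def field_simps power2_eq_square)

lemma fst_torus_act: "fst (torus_act n L x) = fst x"
  by (simp add: torus_act_def fst_W'_act)

lemma isoM_torus_act:
  "j \<in> {1..n - 1} \<Longrightarrow> e < 2 \<Longrightarrow> f < 2 \<Longrightarrow>
   isoM (torus_act n L x) j e f = torus_weight (L j) e * torus_weight (L n) f * isoM x j e f"
  by (simp add: torus_act_def isoM_W'_act rot_eigval_torus)

lemma torus_act_torus_act:
  assumes "\<forall>i\<in>{1..n}. L'' i = L i * L' i"
  shows "torus_act n L (torus_act n L' x) = torus_act n L'' x"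
proof (rule prod_eqI)
  show "fst (torus_act n L (torus_act n L' x)) = fst (torus_act n L'' x)"
    by (simp add: fst_torus_act)
  have "snd (torus_act n L (torus_act n L' x)) j a b = snd (torus_act n L'' x) j a b" for j a b
  proof (cases "j \<in> {1..n - 1} \<and> a < 2 \<and> b < 2")
    case True
    have "L'' j = L j * L' j" "L'' n = L n * L' n" using True assms by auto
    then show ?thesis
      using True by (auto simp: snd_eq_from_iso isoM_torus_act torus_weight_def intro!: from_iso_cong)
  next
    case False
    then show ?thesis by (auto simp: torus_act_def W'_act_def)
  qed
  then show "snd (torus_act n L (torus_act n L' x)) = snd (torus_act n L'' x)" by blast
qed

section \<open>The slice\<close>

definition coord_A :: "nat \<Rightarrow> (nat \<Rightarrow> complex) \<Rightarrow> nat \<Rightarrow> complex" where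
  "coord_A n y j = coord_t y j / 4 - coord_delta n y j / 8"

definition coord_B :: "nat \<Rightarrow> (nat \<Rightarrow> complex) \<Rightarrow> nat \<Rightarrow> complex" where
  "coord_B n y j = coord_t y j / 4 + coord_delta n y j / 8"

definition coord_E :: "nat \<Rightarrow> (nat \<Rightarrow> complex) \<Rightarrow> complex" where
  "coord_E n y = (coord_delta n y 1)\<^sup>2 - (coord_t y 1)\<^sup>2"

definition coord_Delta :: "nat \<Rightarrow> (nat \<Rightarrow> complex) \<Rightarrow> complex" where
  "coord_Delta n y = (\<Prod>j\<in>{1..n - 1}. coord_delta n y j * ((coord_delta n y j)\<^sup>2 - (coord_t y j)\<^sup>2))"

definition slice_rho :: "nat \<Rightarrow> (nat \<Rightarrow> complex) \<Rightarrow> nat \<Rightarrow> complex" where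
  "slice_rho n y j =
     (if j = 1 then coord_B n y 1 else coord_u n y j * coord_E n y / (64 * coord_A n y 1))"

text \<open>A normal form for generic torus orbits: in the isotropic coordinates block \<open>j\<close> is
  \<open>(1, B\<^sub>j / \<rho>\<^sub>j, \<rho>\<^sub>j, A\<^sub>j)\<close>. The torus is used up by making the \<open>(0,0)\<close> entries and the
  \<open>(0,1)\<close> entry of block 1 equal to 1; \<open>\<rho>\<^sub>j\<close> is then forced by \<open>utq\<close>.\<close>
definition slice_iso :: "nat \<Rightarrow> (nat \<Rightarrow> complex) \<Rightarrow> nat \<Rightarrow> nat \<Rightarrow> nat \<Rightarrow> complex" where
  "slice_iso n y j e f =
     (if e = 0 then if f = 0 then 1 else coord_B n y j / slice_rho n y j
      else if f = 0 then slice_rho n y j else coord_A n y j)"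

definition slice :: "nat \<Rightarrow> (nat \<Rightarrow> complex) \<Rightarrow> pt" where
  "slice n y = (coord_alpha n y, \<lambda>j. from_iso (slice_iso n y j))"

definition slice_det :: "nat \<Rightarrow> (nat \<Rightarrow> complex) \<Rightarrow> complex" where
  "slice_det n y = coord_A n y 1 * coord_B n y 1 * coord_E n y * (\<Prod>j\<in>{2..n - 1}. coord_u n y j)"

lemma fst_slice: "fst (slice n y) = coord_alpha n y"
  by (simp add: slice_def)

lemma isoM_slice: "e < 2 \<Longrightarrow> f < 2 \<Longrightarrow> isoM (slice n y) j e f = slice_iso n y j e f"
  by (simp add: isoM_def slice_def iso_from_iso)

lemma slice_rho_nonzero:
  assumes "slice_det n y \<noteq> 0" "j \<in> {1..n - 1}"
  shows "slice_rho n y j \<noteq> 0"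
  using assms by (auto simp: slice_det_def slice_rho_def)

context
  fixes n :: nat and y :: "nat \<Rightarrow> complex"
  assumes n: "2 \<le> n" and generic: "slice_det n y \<noteq> 0"
begin

lemma iso_A_slice: "iso_A (slice n y) j = coord_A n y j"
  by (simp add: iso_A_def isoM_slice slice_iso_def)

lemma iso_B_slice: "j \<in> {1..n - 1} \<Longrightarrow> iso_B (slice n y) j = coord_B n y j"
  using slice_rho_nonzero[OF generic] by (simp add: iso_B_def isoM_slice slice_iso_def)

lemma tq_slice: "j \<in> {1..n - 1} \<Longrightarrow> tq (slice n y) j = coord_t y j"
  by (simp add: tq_iso iso_A_slice iso_B_slice coord_A_def coord_B_def)

lemma delq_slice: "j \<in> {1..n - 1} \<Longrightarrow> delq (slice n y) j = coord_delta n y j"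
  by (simp add: delq_iso iso_A_slice iso_B_slice coord_A_def coord_B_def)

lemma utq_slice:
  assumes j: "j \<in> {2..n - 1}"
  shows "utq (slice n y) j = coord_u n y j"
proof -
  have E: "(delq (slice n y) 1)\<^sup>2 - (tq (slice n y) 1)\<^sup>2 = coord_E n y"
    unfolding tq_slice[OF one_in_range[OF n]] delq_slice[OF one_in_range[OF n]] coord_E_def ..
  have "coord_A n y 1 \<noteq> 0" "coord_B n y 1 \<noteq> 0" "coord_E n y \<noteq> 0"
    using generic by (auto simp: slice_det_def)
  then show ?thesis
    using j unfolding utq_def E
    by (simp add: uq_def wplus_iso wminus_iso isoM_slice slice_iso_def slice_rho_def)
qed

lemma gens_slice: "k < 4 * n - 4 \<Longrightarrow> gens n (slice n y) k = y k"
  by (rule Y_coords_eqI[OF n])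
     (auto simp: coords_gens[OF n] tq_slice delq_slice utq_slice fst_slice)

lemma BigDelta_slice: "BigDelta n (slice n y) = coord_Delta n y"
  unfolding BigDelta_def coord_Delta_def by (rule prod.cong) (simp_all add: tq_slice delq_slice)

end

definition generic_XT :: "nat \<Rightarrow> pt \<Rightarrow> complex" where
  "generic_XT n x = BigDelta n x * (\<Prod>j\<in>{1..n - 1}. \<Prod>e<2. \<Prod>f<2. isoM x j e f)"

lemma generic_XT_nonzero:
  assumes "generic_XT n x \<noteq> 0"
  shows "BigDelta n x \<noteq> 0"
    and "j \<in> {1..n - 1} \<Longrightarrow> e < 2 \<Longrightarrow> f < 2 \<Longrightarrow> isoM x j e f \<noteq> 0"
  using assms by (auto simp: generic_XT_def)

lemma BigDelta_nonzero:
  assumes "BigDelta n x \<noteq> 0" "j \<in> {1..n - 1}"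
  shows "(delq x j)\<^sup>2 - (tq x j)\<^sup>2 \<noteq> 0"
  using assms by (auto simp: BigDelta_def)

lemma coord_Delta_gens: "2 \<le> n \<Longrightarrow> coord_Delta n (gens n x) = BigDelta n x"
  unfolding BigDelta_def coord_Delta_def by (rule prod.cong) (simp_all add: coords_gens)

lemma polyfuns_generic_XT: "generic_XT n \<in> polyfuns (XT_coords n)"
  unfolding generic_XT_def
  by (intro pf_mult polyfuns_prod polyfuns_BigDelta polyfuns_isoM) auto

definition base_point :: pt where
  "base_point = (\<lambda>i. 0, \<lambda>j. from_iso (\<lambda>e f. if e = 1 \<and> f = 1 then 2 else 1))"

lemma generic_XT_base_point: "generic_XT n base_point \<noteq> 0"
proof -
  have iso: "e < 2 \<Longrightarrow> f < 2 \<Longrightarrow> isoM base_point j e f = (if e = 1 \<and> f = 1 then 2 else 1)" for j e f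
    by (simp add: isoM_def base_point_def iso_from_iso)
  then have "tq base_point j = 6" "delq base_point j = -4" for j
    by (simp_all add: tq_iso delq_iso iso_A_def iso_B_def)
  then show ?thesis
    by (simp add: generic_XT_def BigDelta_def prod_zero_iff iso)
qed

context
  fixes n :: nat and x :: pt
  assumes n: "2 \<le> n" and generic: "generic_XT n x \<noteq> 0"
begin

lemmas isoM_nonzero = generic_XT_nonzero(2)[OF generic]

lemma coord_A_gens: "j \<in> {1..n - 1} \<Longrightarrow> coord_A n (gens n x) j = iso_A x j"
  by (simp add: coord_A_def coords_gens[OF n] tq_iso delq_iso field_simps)

lemma coord_B_gens: "j \<in> {1..n - 1} \<Longrightarrow> coord_B n (gens n x) j = iso_B x j"
  by (simp add: coord_B_def coords_gens[OF n] tq_iso delq_iso field_simps)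

lemma coord_E_gens: "coord_E n (gens n x) = (delq x 1)\<^sup>2 - (tq x 1)\<^sup>2"
  unfolding coord_E_def coords_gens(1,2)[OF n one_in_range[OF n]] ..

lemma utq_denominator_nonzero: "(delq x 1)\<^sup>2 - (tq x 1)\<^sup>2 \<noteq> 0"
  using BigDelta_nonzero[OF generic_XT_nonzero(1)[OF generic] one_in_range[OF n]] .

lemma slice_det_gens: "slice_det n (gens n x) \<noteq> 0"
proof -
  have "coord_u n (gens n x) j \<noteq> 0" if "j \<in> {2..n - 1}" for j
    using that utq_denominator_nonzero isoM_nonzero[OF one_in_range[OF n]] isoM_nonzero[of j]
    by (simp add: coords_gens[OF n] utq_def uq_def wplus_iso wminus_iso)
  then show ?thesis
    using utq_denominator_nonzero isoM_nonzero[OF one_in_range[OF n]]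
    unfolding slice_det_def coord_A_gens[OF one_in_range[OF n]] coord_B_gens[OF one_in_range[OF n]] coord_E_gens
    by (simp add: iso_A_def iso_B_def)
qed

lemma slice_rho_gens:
  assumes j: "j \<in> {1..n - 1}"
  shows "slice_rho n (gens n x) j = isoM x 1 0 1 * isoM x j 0 0 * isoM x j 1 0 / isoM x 1 0 0"
proof (cases "j = 1")
  case True
  then show ?thesis
    using isoM_nonzero[OF one_in_range[OF n]] unfolding slice_rho_def coord_B_gens[OF one_in_range[OF n]]
    by (simp add: iso_B_def)
next
  case False
  then have "j \<in> {2..n - 1}" using j by auto
  then show ?thesis
    using False utq_denominator_nonzero isoM_nonzero[OF one_in_range[OF n]]
    unfolding slice_rho_def coord_E_gens coord_A_gens[OF one_in_range[OF n]]
    by (simp add: coords_gens[OF n] iso_A_def utq_def uq_def wplus_iso wminus_iso field_simps)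
qed

text \<open>Reverse the normalisation of \<open>slice_iso\<close>: \<open>L\<^sub>n\<^sup>2 = P\<^sub>1 / Q\<^sub>1\<close> and
  \<open>L\<^sub>j L\<^sub>n = P\<^sub>j\<close>, where \<open>P, Q, R, U\<close> are the isotropic entries of \<open>x\<close>.\<close>
lemma torus_orbit_slice:
  "\<exists>L. (\<forall>i\<in>{1..n}. L i \<noteq> 0) \<and> same_coords n (torus_act n L (slice n (gens n x))) x"
proof -
  define l where "l = csqrt (isoM x 1 0 0 / isoM x 1 0 1)"
  define L where "L i = (if i = n then l else isoM x i 0 0 / l)" for i
  have nz1: "isoM x 1 0 0 \<noteq> 0" "isoM x 1 0 1 \<noteq> 0" using isoM_nonzero[OF one_in_range[OF n]] by auto
  have ll: "l * l = isoM x 1 0 0 / isoM x 1 0 1"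
    unfolding l_def power2_eq_square[symmetric] by simp
  have "l \<noteq> 0" using nz1 by (simp add: l_def)
  have "L i \<noteq> 0" if "i \<in> {1..n}" for i
  proof (cases "i = n")
    case False
    then have "i \<in> {1..n - 1}" using that by auto
    then show ?thesis using isoM_nonzero[of i 0 0] \<open>l \<noteq> 0\<close> False by (simp add: L_def)
  qed (simp add: L_def \<open>l \<noteq> 0\<close>)
  moreover have "same_coords n (torus_act n L (slice n (gens n x))) x"
  proof (rule same_coordsI)
    show "\<forall>i\<in>{1..n}. fst (torus_act n L (slice n (gens n x))) i = fst x i"
      by (simp add: fst_torus_act fst_slice coords_gens[OF n])
    show "\<forall>j\<in>{1..n - 1}. \<forall>e<2. \<forall>f<2. isoM (torus_act n L (slice n (gens n x))) j e f = isoM x j e f"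
    proof (intro ballI allI impI)
      fix j e f :: nat
      assume j: "j \<in> {1..n - 1}" and "e < 2" "f < 2"
      have Lj: "L j = isoM x j 0 0 / l" and Ln: "L n = l" using j by (auto simp: L_def)
      have "isoM x j 0 0 \<noteq> 0" "isoM x j 0 1 \<noteq> 0" "isoM x j 1 0 \<noteq> 0" "isoM x j 1 1 \<noteq> 0"
        using isoM_nonzero[OF j] by auto
      then show "isoM (torus_act n L (slice n (gens n x))) j e f = isoM x j e f"
        unfolding isoM_torus_act[OF j \<open>e < 2\<close> \<open>f < 2\<close>] isoM_slice[OF \<open>e < 2\<close> \<open>f < 2\<close>] Lj Ln
        using \<open>e < 2\<close> \<open>f < 2\<close> nz1 \<open>l \<noteq> 0\<close> ll
        by (auto simp: less_2_cases slice_iso_def torus_weight_def slice_rho_gens[OF j]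
            coord_A_gens[OF j] coord_B_gens[OF j] iso_A_def iso_B_def field_simps)
    qed
  qed
  ultimately show ?thesis by blast
qed

end

lemma rational_gens:
  assumes n: "2 \<le> n" and k: "k < 4 * n - 4"
  shows "rational_on (XT_coords n) {x. BigDelta n x \<noteq> 0} (\<lambda>x. gens n x k)"
  using n k
proof (cases rule: Y_index_cases)
  case (t j)
  then show ?thesis
    using coords_gens(1)[OF n] by (auto simp: coord_t_def intro!: rational_on_polyfun polyfuns_tq)
next
  case (delta j)
  then show ?thesis
    using coords_gens(2)[OF n] by (auto simp: coord_delta_def intro!: rational_on_polyfun polyfuns_delq)
next
  case (u j)
  have "rational_on (XT_coords n) {x. BigDelta n x \<noteq> 0} (\<lambda>x. uq x 1 j / ((delq x 1)\<^sup>2 - (tq x 1)\<^sup>2))"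
    using u(1) BigDelta_nonzero[OF _ one_in_range[OF n]]
    by (intro rational_on_divide rational_on_polyfun polyfuns_uq polyfuns_diff polyfuns_power
        polyfuns_tq polyfuns_delq one_in_range[OF n]) auto
  then show ?thesis
    using coords_gens(3)[OF n u(1)] u(2) by (simp add: coord_u_def utq_def)
next
  case (alpha i)
  then show ?thesis
    using coords_gens(4)[OF n] by (auto simp: coord_alpha_def intro!: rational_on_polyfun polyfuns_XT_alpha)
qed

context
  fixes n :: nat
  assumes n: "2 \<le> n"
begin

lemma polyfuns_coords_ABE:
  shows "j \<in> {1..n - 1} \<Longrightarrow> (\<lambda>y. coord_A n y j) \<in> polyfuns (Y_coords (4 * n - 4))"
    and "j \<in> {1..n - 1} \<Longrightarrow> (\<lambda>y. coord_B n y j) \<in> polyfuns (Y_coords (4 * n - 4))"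
    and "(\<lambda>y. coord_E n y) \<in> polyfuns (Y_coords (4 * n - 4))"
  using n unfolding coord_A_def coord_B_def coord_E_def
  by (intro polyfuns_diff pf_add polyfuns_power polyfuns_divide_const polyfuns_coords; simp)+

lemma polyfuns_slice_det: "slice_det n \<in> polyfuns (Y_coords (4 * n - 4))"
  unfolding slice_det_def
  by (intro pf_mult polyfuns_prod polyfuns_coords_ABE polyfuns_coords(3)[OF n]) (use n in auto)

lemma polyfuns_coord_Delta: "coord_Delta n \<in> polyfuns (Y_coords (4 * n - 4))"
  unfolding coord_Delta_def
  by (intro polyfuns_prod pf_mult polyfuns_diff polyfuns_power polyfuns_coords[OF n]) auto

lemma rational_slice_rho:
  assumes j: "j \<in> {1..n - 1}"
  shows "rational_on (Y_coords (4 * n - 4)) {y. slice_det n y \<noteq> 0} (\<lambda>y. slice_rho n y j)"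
proof (cases "j = 1")
  case True
  then show ?thesis
    unfolding slice_rho_def using j by (simp add: rational_on_polyfun polyfuns_coords_ABE)
next
  case False
  have "rational_on (Y_coords (4 * n - 4)) {y. slice_det n y \<noteq> 0}
          (\<lambda>y. coord_u n y j * coord_E n y / (64 * coord_A n y 1))"
    using False j
    by (intro rational_on_divide rational_on_polyfun pf_mult pf_const polyfuns_coords_ABE
        polyfuns_coords(3)[OF n] one_in_range[OF n]) (auto simp: slice_det_def)
  then show ?thesis
    unfolding slice_rho_def using False by simp
qed

lemma rational_slice_iso:
  assumes j: "j \<in> {1..n - 1}"
  shows "rational_on (Y_coords (4 * n - 4)) {y. slice_det n y \<noteq> 0} (\<lambda>y. slice_iso n y j e f)"
proof -
  have rho: "rational_on (Y_coords (4 * n - 4)) {y. slice_det n y \<noteq> 0} (\<lambda>y. slice_rho n y j)"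
    by (rule rational_slice_rho[OF j])
  have "rational_on (Y_coords (4 * n - 4)) {y. slice_det n y \<noteq> 0} (\<lambda>y. coord_B n y j / slice_rho n y j)"
    using slice_rho_nonzero[OF _ j]
    by (intro rational_on_divide rho rational_on_polyfun polyfuns_coords_ABE(2) j) auto
  then show ?thesis
    using j by (cases "e = 0"; cases "f = 0")
      (simp_all add: slice_iso_def rho rational_on_polyfun pf_const polyfuns_coords_ABE(1))
qed

lemma rational_torus_slice:
  assumes "v \<in> XT_coords n"
  shows "rational_on (Y_coords (4 * n - 4)) {y. slice_det n y \<noteq> 0} (\<lambda>y. v (torus_act n L (slice n y)))"
proof -
  from assms consider i where "v = (\<lambda>x. fst x i)" "i \<in> {1..n}"
    | j a b where "v = (\<lambda>x. snd x j a b)" "j \<in> {1..n - 1}" "a < 2" "b < 2"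
    unfolding XT_coords_def by auto
  then show ?thesis
  proof cases
    case 1
    then show ?thesis
      by (simp add: fst_torus_act fst_slice rational_on_polyfun polyfuns_coords(4)[OF n])
  next
    case (2 j a b)
    then show ?thesis
      by (simp add: snd_eq_from_iso from_iso_def sum_less_2 isoM_torus_act isoM_slice)
         (intro rational_on_add rational_on_mult rational_on_polyfun[OF pf_const]
           rational_slice_iso[OF 2(2)])
  qed
qed

end

section \<open>The field of invariants\<close>

context
  fixes n :: nat
  assumes n: "2 \<le> n"
begin

lemma gens_algebraically_independent:
  assumes P: "P \<in> polyfuns (Y_coords (4 * n - 4))"
    and vanish: "\<And>x. BigDelta n x \<noteq> 0 \<Longrightarrow> P (gens n x) = 0"
  shows "P y = 0"
proof (rule polyfun_vanishing_on_principal_open[OF polynomial_curves_Y P])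
  show "(\<lambda>y. slice_det n y * coord_Delta n y) \<in> polyfuns (Y_coords (4 * n - 4))"
    by (intro pf_mult polyfuns_slice_det[OF n] polyfuns_coord_Delta[OF n])
  show "slice_det n (gens n base_point) * coord_Delta n (gens n base_point) \<noteq> 0"
    using slice_det_gens[OF n generic_XT_base_point] generic_XT_nonzero(1)[OF generic_XT_base_point]
    by (simp add: coord_Delta_gens[OF n])
next
  fix y
  assume "slice_det n y * coord_Delta n y \<noteq> 0"
  then have "slice_det n y \<noteq> 0" "BigDelta n (slice n y) \<noteq> 0"
    by (simp_all add: BigDelta_slice[OF n])
  then have "P y = P (gens n (slice n y))"
    by (intro polyfuns_Y_coords_cong[OF P]) (simp add: gens_slice[OF n])
  also have "\<dots> = 0"
    by (rule vanish) fact
  finally show "P y = 0" .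
qed

context
  fixes p q :: "pt \<Rightarrow> complex"
  assumes p: "p \<in> polyfuns (XT_coords n)" and q: "q \<in> polyfuns (XT_coords n)"
    and invariant: "\<And>rc rs x. W'_param n rc rs \<Longrightarrow>
                      p (W'_act n rc rs x) * q x = q (W'_act n rc rs x) * p x"
begin

lemma invariant_ratio_torus_slice:
  assumes L0: "\<forall>i\<in>{1..n}. L0 i \<noteq> 0" and generic: "generic_XT n x \<noteq> 0"
  shows "p x * q (torus_act n L0 (slice n (gens n x))) = q x * p (torus_act n L0 (slice n (gens n x)))"
proof -
  define z where "z = torus_act n L0 (slice n (gens n x))"
  obtain L where L: "\<forall>i\<in>{1..n}. L i \<noteq> 0"
    and orbit: "same_coords n (torus_act n L (slice n (gens n x))) x"
    using torus_orbit_slice[OF n generic] by blast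
  define L' where "L' i = L i / L0 i" for i
  have "torus_act n L' z = torus_act n L (slice n (gens n x))"
    unfolding z_def using L0 by (intro torus_act_torus_act) (simp add: L'_def)
  moreover have "p (torus_act n L' z) * q z = q (torus_act n L' z) * p z"
    using invariant[OF W'_param_torus] L L0 unfolding torus_act_def by (simp add: L'_def)
  ultimately show ?thesis
    using polyfuns_same_coords[OF p orbit] polyfuns_same_coords[OF q orbit] by (simp add: z_def)
qed

lemma invariant_fraction_on_generic:
  assumes "q x0 \<noteq> 0"
  obtains P Q where "P \<in> polyfuns (Y_coords (4 * n - 4))" "Q \<in> polyfuns (Y_coords (4 * n - 4))"
    "\<exists>y. Q y \<noteq> 0" "\<And>x. generic_XT n x \<noteq> 0 \<Longrightarrow> p x * Q (gens n x) = q x * P (gens n x)"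
proof -
  obtain x1 where x1: "generic_XT n x1 \<noteq> 0" "q x1 \<noteq> 0"
    using polyfun_vanishing_on_principal_open[OF polynomial_curves_XT q polyfuns_generic_XT
        generic_XT_base_point] assms by blast
  obtain L0 where L0: "\<forall>i\<in>{1..n}. L0 i \<noteq> 0"
    and orbit: "same_coords n (torus_act n L0 (slice n (gens n x1))) x1"
    using torus_orbit_slice[OF n x1(1)] by blast
  let ?S = "{y. slice_det n y \<noteq> 0}" and ?\<Phi> = "\<lambda>y. torus_act n L0 (slice n y)"
  have frac: "rational_on (Y_coords (4 * n - 4)) ?S (\<lambda>y. F (?\<Phi> y))" if "F \<in> polyfuns (XT_coords n)" for F
    using rational_on_compose[of "XT_coords n" _ ?S ?\<Phi>] rational_torus_slice[OF n] that by blast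
  obtain cp dp where cp: "cp \<in> polyfuns (Y_coords (4 * n - 4))" "dp \<in> polyfuns (Y_coords (4 * n - 4))"
    and p_frac: "\<And>y. y \<in> ?S \<Longrightarrow> dp y \<noteq> 0 \<and> p (?\<Phi> y) = cp y / dp y"
    using frac[OF p] unfolding rational_on_def by blast
  obtain cq dq where cq: "cq \<in> polyfuns (Y_coords (4 * n - 4))" "dq \<in> polyfuns (Y_coords (4 * n - 4))"
    and q_frac: "\<And>y. y \<in> ?S \<Longrightarrow> dq y \<noteq> 0 \<and> q (?\<Phi> y) = cq y / dq y"
    using frac[OF q] unfolding rational_on_def by blast
  \<comment> \<open>\<open>P/Q\<close> is \<open>p/q\<close> at \<open>L\<^sub>0 \<cdot> slice y\<close>; taking \<open>L\<^sub>0\<close> from \<open>x\<^sub>1\<close>, where \<open>q \<noteq> 0\<close>, makes \<open>Q \<noteq> 0\<close>.\<close>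
  show ?thesis
  proof
    show "(\<lambda>y. cp y * dq y) \<in> polyfuns (Y_coords (4 * n - 4))"
      and "(\<lambda>y. cq y * dp y) \<in> polyfuns (Y_coords (4 * n - 4))"
      using cp cq by (auto intro: pf_mult)
    have "gens n x1 \<in> ?S" using slice_det_gens[OF n x1(1)] by simp
    then show "\<exists>y. cq y * dp y \<noteq> 0"
      using p_frac q_frac polyfuns_same_coords[OF q orbit] x1(2) by force
  next
    fix x
    assume generic: "generic_XT n x \<noteq> 0"
    then have "gens n x \<in> ?S" using slice_det_gens[OF n] by simp
    then show "p x * (cq (gens n x) * dp (gens n x)) = q x * (cp (gens n x) * dq (gens n x))"
      using invariant_ratio_torus_slice[OF L0 generic] p_frac q_frac
      by (auto simp: field_simps)
  qed
qed

lemma invariant_fraction_rational_in_gens: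
  assumes "q x0 \<noteq> 0"
  shows "\<exists>P \<in> polyfuns (Y_coords (4 * n - 4)). \<exists>Q \<in> polyfuns (Y_coords (4 * n - 4)).
           (\<exists>y. Q y \<noteq> 0) \<and> (\<forall>x. BigDelta n x \<noteq> 0 \<longrightarrow> p x * Q (gens n x) = q x * P (gens n x))"
proof -
  obtain P Q where P: "P \<in> polyfuns (Y_coords (4 * n - 4))" and Q: "Q \<in> polyfuns (Y_coords (4 * n - 4))"
    and "\<exists>y. Q y \<noteq> 0"
    and on_generic: "\<And>x. generic_XT n x \<noteq> 0 \<Longrightarrow> p x * Q (gens n x) = q x * P (gens n x)"
    using invariant_fraction_on_generic[OF assms] by blast
  have gens_rational:
    "\<forall>w\<in>Y_coords (4 * n - 4). rational_on (XT_coords n) {x. BigDelta n x \<noteq> 0} (\<lambda>x. w (gens n x))"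
    using rational_gens[OF n] by (auto simp: Y_coords_def)
  have "rational_on (XT_coords n) {x. BigDelta n x \<noteq> 0} (\<lambda>x. p x * Q (gens n x) - q x * P (gens n x))"
    by (intro rational_on_diff rational_on_mult rational_on_polyfun p q
        rational_on_compose[OF gens_rational] P Q)
  then have "p x * Q (gens n x) - q x * P (gens n x) = 0" if "BigDelta n x \<noteq> 0" for x
    by (rule rational_on_vanishing_on_principal_open
        [OF polynomial_curves_XT _ polyfuns_generic_XT generic_XT_base_point])
       (use that on_generic generic_XT_nonzero(1) in auto)
  with P Q \<open>\<exists>y. Q y \<noteq> 0\<close> show ?thesis by auto
qed

end

end

theorem corollary8p12:
  fixes n :: nat
  assumes "n \<ge> 2"
  shows
    \<comment> \<open>the generators are W'-invariant (on the open set Delta \<noteq> 0, which is W'-stable)\<close>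
    "(\<forall>rc rs x. W'_param n rc rs \<and> BigDelta n x \<noteq> 0 \<longrightarrow>
        BigDelta n (W'_act n rc rs x) \<noteq> 0 \<and> gens n (W'_act n rc rs x) = gens n x)
     \<and>
    \<comment> \<open>they are algebraically independent over C\<close>
     (\<forall>P \<in> polyfuns (Y_coords (4 * n - 4)).
        (\<forall>x. BigDelta n x \<noteq> 0 \<longrightarrow> P (gens n x) = 0) \<longrightarrow> (\<forall>y. P y = 0))
     \<and>
    \<comment> \<open>every W'-invariant rational function p/q is a rational function of them\<close>
     (\<forall>p \<in> polyfuns (XT_coords n). \<forall>q \<in> polyfuns (XT_coords n).
        (\<exists>x. q x \<noteq> 0) \<and>
        (\<forall>rc rs x. W'_param n rc rs \<longrightarrow>
            p (W'_act n rc rs x) * q x = q (W'_act n rc rs x) * p x)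
        \<longrightarrow>
        (\<exists>P \<in> polyfuns (Y_coords (4 * n - 4)). \<exists>Q \<in> polyfuns (Y_coords (4 * n - 4)).
           (\<exists>y. Q y \<noteq> 0) \<and>
           (\<forall>x. BigDelta n x \<noteq> 0 \<longrightarrow> p x * Q (gens n x) = q x * P (gens n x))))"
proof (intro conjI allI impI ballI)
  show "BigDelta n (W'_act n rc rs x) \<noteq> 0" "gens n (W'_act n rc rs x) = gens n x"
    if "W'_param n rc rs \<and> BigDelta n x \<noteq> 0" for rc rs x
    using that by (simp_all add: BigDelta_W'_act gens_W'_act)
  show "P y = 0"
    if "P \<in> polyfuns (Y_coords (4 * n - 4))" "\<forall>x. BigDelta n x \<noteq> 0 \<longrightarrow> P (gens n x) = 0" for P y
    using gens_algebraically_independent[OF assms] that by blast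
next
  fix p q
  assume p: "p \<in> polyfuns (XT_coords n)" and q: "q \<in> polyfuns (XT_coords n)"
    and hyp: "(\<exists>x. q x \<noteq> 0) \<and> (\<forall>rc rs x. W'_param n rc rs \<longrightarrow>
                p (W'_act n rc rs x) * q x = q (W'_act n rc rs x) * p x)"
  then obtain x0 where "q x0 \<noteq> 0" by blast
  with hyp show "\<exists>P \<in> polyfuns (Y_coords (4 * n - 4)). \<exists>Q \<in> polyfuns (Y_coords (4 * n - 4)).
      (\<exists>y. Q y \<noteq> 0) \<and> (\<forall>x. BigDelta n x \<noteq> 0 \<longrightarrow> p x * Q (gens n x) = q x * P (gens n x))"
    by (intro invariant_fraction_rational_in_gens[OF assms p q]) auto
qed

end
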